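(* For the submodule $M=[(z-w)^2]$ of $H^2(\mathbb D^2)$, \[ \Sigma_2(M)=\sum_{n=0}^\infty|\langle w^2\phi_n,z^2\psi_n\rangle|^2=\frac{178}{3}\pi^2-585. \]
   Context: $H^2(\mathbb D^2)$ is the Hardy space on the bidisk (monomials $z^aw^b$ orthonormal), $[q]$ the smallest closed subspace containing $q$ and invariant under multiplication by $z$ and $w$. Let $p=(z-w)^2$. For $n\ge0$ let $A^n=(a_{i,j})_{i,j=0}^n$ with $a_{i,j}=\langle pw^{|i-j|},pz^{|i-j|}\rangle$ (this is the symmetric pentadiagonal Toeplitz matrix with diagonal $6$, first off-diagonals $-4$, second off-diagonals $1$); $D_0=1$, $D_n=\det A^{n-1}$ ($n\ge1$); $A^n_{i,j}$ is the $(i,j)$ cofactor ($(-1)^{i+j}$ times the minor deleting row $i$ and column $j$). Define $\phi_0=\psi_0=p/\|p\|$ and for $n\ge1$ \[ \phi_n=\frac{\sum_{j=0}^n pA^n_{0,j}z^jw^{n-j}}{\sqrt{D_{n+1}D_n}},\qquad \psi_n=\frac{\sum_{j=0}^n pA^n_{n,j}z^jw^{n-j}}{\sqrt{D_{n+1}D_n}}; \] these form orthonormal bases of $M\ominus zM$ and $M\ominus wM$ respectively. For $k\ge0$, $\Sigma_k(M):=\sum_{n\ge0}|\langle w^k\phi_n,z^k\psi_n\rangle|^2$. *)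

theory Defs
  imports "Jordan_Normal_Form.Determinant" "HOL-Analysis.Infinite_Sum"
begin

text \<open>Polynomials in two variables z, w are represented by their coefficient
  functions: f a b is the coefficient of z^a w^b.  Monomials are orthonormal
  in the Hardy space of the bidisk, so the inner product is the (here real,
  all coefficients being real) sum of products of coefficients.\<close>

type_synonym poly2 = "nat \<Rightarrow> nat \<Rightarrow> real"

definition H2_inner :: "poly2 \<Rightarrow> poly2 \<Rightarrow> real" where
  "H2_inner f g = (\<Sum>\<^sub>\<infinity>(a,b)\<in>UNIV. f a b * g a b)"

definition H2_norm :: "poly2 \<Rightarrow> real" where
  "H2_norm f = sqrt (H2_inner f f)"

definition pmul :: "poly2 \<Rightarrow> poly2 \<Rightarrow> poly2" where
  "pmul f g = (\<lambda>a b. \<Sum>i\<le>a. \<Sum>j\<le>b. f i j * g (a - i) (b - j))"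

definition pscale :: "real \<Rightarrow> poly2 \<Rightarrow> poly2" where
  "pscale c f = (\<lambda>a b. c * f a b)"

definition padd :: "poly2 \<Rightarrow> poly2 \<Rightarrow> poly2" where
  "padd f g = (\<lambda>a b. f a b + g a b)"

definition mono :: "nat \<Rightarrow> nat \<Rightarrow> poly2" where
  "mono i j = (\<lambda>a b. if a = i \<and> b = j then 1 else 0)"

definition pp :: poly2 where
  "pp = pmul (padd (mono 1 0) (pscale (-1) (mono 0 1)))
             (padd (mono 1 0) (pscale (-1) (mono 0 1)))"

definition Amat :: "nat \<Rightarrow> real mat" where
  "Amat n = mat (n+1) (n+1) (\<lambda>(i,j).
      (let d = (if i \<le> j then j - i else i - j)
       in H2_inner (pmul pp (mono 0 d)) (pmul pp (mono d 0))))"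

definition Dd :: "nat \<Rightarrow> real" where
  "Dd n = (if n = 0 then 1 else det (Amat (n - 1)))"

definition phi :: "nat \<Rightarrow> poly2" where
  "phi n = (if n = 0 then pscale (1 / H2_norm pp) pp
            else pscale (1 / sqrt (Dd (n+1) * Dd n))
              (\<lambda>a b. \<Sum>j\<le>n. cofactor (Amat n) 0 j * pmul pp (mono j (n - j)) a b))"

definition psi :: "nat \<Rightarrow> poly2" where
  "psi n = (if n = 0 then pscale (1 / H2_norm pp) pp
            else pscale (1 / sqrt (Dd (n+1) * Dd n))
              (\<lambda>a b. \<Sum>j\<le>n. cofactor (Amat n) n j * pmul pp (mono j (n - j)) a b))"

definition Sigma_term :: "nat \<Rightarrow> nat \<Rightarrow> real" where
  "Sigma_term k n = (H2_inner (pmul (mono 0 k) (phi n)) (pmul (mono k 0) (psi n)))\<^sup>2"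

end

theory Submission
  imports Defs "HOL-Analysis.Gamma_Function"
begin

text \<open>
  The vectors p z^j w^(n-j), j = 0..n, have the Toeplitz Gram matrix A^n with symbol 6, -4, 1, so by
  Cramer's rule the cofactors A^n_{0,j} and A^n_{n,j} are D_{n+1} times the first and last columns
  of (A^n)^{-1}. These columns are explicit: away from the boundary A^n acts as the fourth difference
  operator, which annihilates the cubic v(t) = (t+1)(n+1-t)(n+2-t)/((n+3)(n+4)), and the roots of v
  absorb the boundary terms. Comparing the (0,0) cofactor with v(0) gives the recursion for D_n, hence
  D_n = (n+1)(n+2)^2(n+3)/12. Multiplying by w^2 and z^2 shifts the indices by 2, so the inner product
  <w^2 phi_n, z^2 psi_n> only sees the two rows of the banded matrix beyond A^n and equals
  -2(n^2+5n-2)/((n+2)(n+3)(n+4)). Its square splits into partial fractions, which are summed by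
  shifted Basel series and telescoping series.
\<close>

lemma sum_atMost_delta2:
  fixes m n :: nat
  shows "(\<Sum>i\<le>m. \<Sum>j\<le>n. if i = p \<and> j = q then c else 0) = (if p \<le> m \<and> q \<le> n then c else 0)"
proof -
  have "(\<Sum>i\<le>m. \<Sum>j\<le>n. if i = p \<and> j = q then c else 0)
      = (\<Sum>i\<le>m. if i = p then \<Sum>j\<le>n. if j = q then c else 0 else 0)"
    by (intro sum.cong) auto
  then show ?thesis by simp
qed

lemma pmul_mono_left:
  "pmul (mono p q) g x y = (if p \<le> x \<and> q \<le> y then g (x - p) (y - q) else 0)"
proof -
  have "pmul (mono p q) g x y = (\<Sum>i\<le>x. \<Sum>j\<le>y. if i = p \<and> j = q then g (x - p) (y - q) else 0)"
    unfolding pmul_def mono_def by (intro sum.cong) auto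
  then show ?thesis by (simp add: sum_atMost_delta2)
qed

lemma pmul_mono_right:
  "pmul g (mono p q) x y = (if p \<le> x \<and> q \<le> y then g (x - p) (y - q) else 0)"
proof -
  have "pmul g (mono p q) x y = (\<Sum>i\<le>x. \<Sum>j\<le>y. if i = x - p \<and> j = y - q then
      (if p \<le> x \<and> q \<le> y then g (x - p) (y - q) else 0) else 0)"
    unfolding pmul_def mono_def by (intro sum.cong) auto
  then show ?thesis by (simp add: sum_atMost_delta2)
qed

lemma pmul_padd_left: "pmul (padd f g) h = padd (pmul f h) (pmul g h)"
  unfolding pmul_def padd_def by (simp add: ring_distribs sum.distrib)

lemma pmul_pscale_left: "pmul (pscale c f) g = pscale c (pmul f g)"
  unfolding pmul_def pscale_def by (simp add: sum_distrib_left mult.assoc)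

lemma pp_coeff:
  "pp x y = (if x = 2 \<and> y = 0 then 1 else 0) - 2 * (if x = 1 \<and> y = 1 then 1 else 0)
            + (if x = 0 \<and> y = 2 then 1 else 0)"
  unfolding pp_def pmul_padd_left pmul_pscale_left
  by (simp add: padd_def pscale_def pmul_mono_left) (auto simp: mono_def)

definition p_mono :: "nat \<Rightarrow> nat \<Rightarrow> poly2" where
  "p_mono a b = pmul pp (mono a b)"

lemma p_mono_coeff:
  "p_mono a b x y = (if x = a + 2 \<and> y = b then 1 else 0) - 2 * (if x = a + 1 \<and> y = b + 1 then 1 else 0)
            + (if x = a \<and> y = b + 2 then 1 else 0)"
  unfolding p_mono_def pmul_mono_right pp_coeff by auto

lemma p_mono_0_0: "p_mono 0 0 = pp"
  by (simp add: fun_eq_iff p_mono_def pmul_mono_right)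

lemma p_mono_eq_0_outside: "a + b + 2 \<le> N \<Longrightarrow> (x, y) \<notin> {..N} \<times> {..N} \<Longrightarrow> p_mono a b x y = 0"
  by (auto simp: p_mono_coeff)

lemma pmul_mono_p_mono: "pmul (mono i j) (p_mono a b) = p_mono (a + i) (b + j)"
  by (auto simp: fun_eq_iff pmul_mono_left p_mono_coeff)

lemma pmul_mono_sum:
  "pmul (mono i j) (\<lambda>x y. \<Sum>k\<in>K. c k * f k x y) = (\<lambda>x y. \<Sum>k\<in>K. c k * pmul (mono i j) (f k) x y)"
  by (auto simp: fun_eq_iff pmul_mono_left)

lemma H2_inner_finite_support:
  assumes "finite S" "\<And>x y. (x, y) \<notin> S \<Longrightarrow> f x y * g x y = 0"
  shows "H2_inner f g = (\<Sum>(x, y)\<in>S. f x y * g x y)"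
proof -
  have "H2_inner f g = (\<Sum>\<^sub>\<infinity>(x, y)\<in>S. f x y * g x y)"
    unfolding H2_inner_def by (rule infsum_cong_neutral) (use assms(2) in auto)
  with assms(1) show ?thesis by simp
qed

lemma H2_inner_sum_sum:
  assumes "finite J" "finite K" "finite S"
    and "\<And>j x y. j \<in> J \<Longrightarrow> (x, y) \<notin> S \<Longrightarrow> f j x y = 0"
    and "\<And>k x y. k \<in> K \<Longrightarrow> (x, y) \<notin> S \<Longrightarrow> g k x y = 0"
  shows "H2_inner (\<lambda>x y. \<Sum>j\<in>J. c j * f j x y) (\<lambda>x y. \<Sum>k\<in>K. d k * g k x y)
       = (\<Sum>j\<in>J. \<Sum>k\<in>K. c j * d k * H2_inner (f j) (g k))"
proof -
  have inner_fg: "H2_inner (f j) (g k) = (\<Sum>(x, y)\<in>S. f j x y * g k x y)" if "j \<in> J" for j k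
    by (rule H2_inner_finite_support) (use assms(3,4) that in auto)
  have "H2_inner (\<lambda>x y. \<Sum>j\<in>J. c j * f j x y) (\<lambda>x y. \<Sum>k\<in>K. d k * g k x y)
      = (\<Sum>(x, y)\<in>S. (\<Sum>j\<in>J. c j * f j x y) * (\<Sum>k\<in>K. d k * g k x y))"
    by (rule H2_inner_finite_support) (use assms(3,4) in auto)
  also have "\<dots> = (\<Sum>(x, y)\<in>S. \<Sum>j\<in>J. \<Sum>k\<in>K. c j * d k * (f j x y * g k x y))"
    by (simp add: sum_product mult_ac)
  also have "\<dots> = (\<Sum>j\<in>J. \<Sum>k\<in>K. c j * d k * (\<Sum>(x, y)\<in>S. f j x y * g k x y))"
    by (simp add: sum_distrib_left case_prod_beta sum.swap[of _ S])
  also have "\<dots> = (\<Sum>j\<in>J. \<Sum>k\<in>K. c j * d k * H2_inner (f j) (g k))"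
    by (simp add: inner_fg)
  finally show ?thesis .
qed

definition toeplitz_coeff :: "nat \<Rightarrow> real" where
  "toeplitz_coeff d = (if d = 0 then 6 else if d = 1 then -4 else if d = 2 then 1 else 0)"

definition absdiff :: "nat \<Rightarrow> nat \<Rightarrow> nat" where
  "absdiff i j = (if i \<le> j then j - i else i - j)"

lemma absdiff_commute: "absdiff i j = absdiff j i"
  by (simp add: absdiff_def)

lemma absdiff_rev: "i \<le> n \<Longrightarrow> j \<le> n \<Longrightarrow> absdiff (n - i) (n - j) = absdiff i j"
  by (auto simp: absdiff_def)

lemma H2_inner_p_mono:
  assumes "a + b = c + d"
  shows "H2_inner (p_mono a b) (p_mono c d) = toeplitz_coeff (absdiff a c)"
proof -
  have "H2_inner (p_mono a b) (p_mono c d)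
      = (\<Sum>(x, y)\<in>{(a + 2, b), (a + 1, b + 1), (a, b + 2)}. p_mono a b x y * p_mono c d x y)"
    by (rule H2_inner_finite_support) (auto simp: p_mono_coeff)
  also have "\<dots> = p_mono c d (a + 2) b - 2 * p_mono c d (a + 1) (b + 1) + p_mono c d a (b + 2)"
    by (simp add: p_mono_coeff)
  also have "\<dots> = toeplitz_coeff (absdiff a c)"
    using assms by (auto simp: p_mono_coeff toeplitz_coeff_def absdiff_def)
  finally show ?thesis .
qed

lemma H2_norm_pp: "H2_norm pp = sqrt 6"
  using H2_inner_p_mono[of 0 0 0 0] by (simp add: H2_norm_def p_mono_0_0 toeplitz_coeff_def absdiff_def)

lemma Amat_carrier: "Amat n \<in> carrier_mat (n + 1) (n + 1)"
  by (simp add: Amat_def)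

lemma Amat_entry:
  assumes "i \<le> n" "j \<le> n"
  shows "Amat n $$ (i, j) = toeplitz_coeff (absdiff i j)"
  using assms H2_inner_p_mono[of 0 "absdiff i j" "absdiff i j" 0]
  by (simp add: Amat_def p_mono_def absdiff_def Let_def)

lemma Amat_mult_vec:
  assumes "i \<le> n"
  shows "(Amat n *\<^sub>v Matrix.vec (n + 1) f) $ i = (\<Sum>j\<le>n. toeplitz_coeff (absdiff i j) * f j)"
proof -
  have "(Amat n *\<^sub>v Matrix.vec (n + 1) f) $ i = (\<Sum>j\<in>{0..<n + 1}. Amat n $$ (i, j) * f j)"
    using assms Amat_carrier[of n] by (simp add: scalar_prod_def)
  also have "\<dots> = (\<Sum>j\<le>n. toeplitz_coeff (absdiff i j) * f j)"
    using assms by (intro sum.cong) (auto simp: Amat_entry)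
  finally show ?thesis .
qed

lemma sum_atMost_delta_shift:
  fixes n :: nat
  shows "(\<Sum>j\<le>n. if j + k = i then f j else 0) = (if k \<le> i \<and> i \<le> n + k then f (i - k) else 0)"
proof (cases "k \<le> i")
  case True
  then have "(j + k = i) = (j = i - k)" for j by auto
  with True show ?thesis by auto
qed auto

lemma toeplitz_coeff_absdiff_mult:
  "toeplitz_coeff (absdiff i j) * f j =
     (if j + 2 = i then f j else 0) - 4 * (if j + 1 = i then f j else 0) + 6 * (if j = i then f j else 0)
     - 4 * (if j = i + 1 then f j else 0) + (if j = i + 2 then f j else 0)"
  by (auto simp: toeplitz_coeff_def absdiff_def)

lemma toeplitz_row_sum:
  "(\<Sum>j\<le>n. toeplitz_coeff (absdiff i j) * f j) =
     (if 2 \<le> i \<and> i \<le> n + 2 then f (i - 2) else 0) - 4 * (if 1 \<le> i \<and> i \<le> n + 1 then f (i - 1) else 0)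
   + 6 * (if i \<le> n then f i else 0) - 4 * (if i + 1 \<le> n then f (i + 1) else 0)
   + (if i + 2 \<le> n then f (i + 2) else 0)"
  unfolding toeplitz_coeff_absdiff_mult sum.distrib sum_subtractf sum_distrib_left[symmetric]
    sum_atMost_delta_shift sum.delta[OF finite_atMost]
  by simp

(* The first column of the inverse of A^n, extended to a cubic in t; the last column is its
   reflection t \<mapsto> n - t. *)
definition inv_col :: "nat \<Rightarrow> real \<Rightarrow> real" where
  "inv_col n t = (t + 1) * (real n + 1 - t) * (real n + 2 - t) / ((real n + 3) * (real n + 4))"

lemma inv_col_special_values:
  "inv_col n (-2) = -1" "inv_col n (-1) = 0" "inv_col n (real n + 1) = 0" "inv_col n (real n + 2) = 0"
proof -
  have "(real n + 3) * (real n + 4) \<noteq> 0" by simp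
  then show "inv_col n (-2) = -1" by (simp add: inv_col_def field_simps)
qed (simp_all add: inv_col_def)

lemma inv_col_fourth_difference:
  "inv_col n (t - 2) - 4 * inv_col n (t - 1) + 6 * inv_col n t - 4 * inv_col n (t + 1) + inv_col n (t + 2) = 0"
proof -
  define c where "c s = (s + 1) * (real n + 1 - s) * (real n + 2 - s)" for s
  have "inv_col n (t - 2) - 4 * inv_col n (t - 1) + 6 * inv_col n t - 4 * inv_col n (t + 1) + inv_col n (t + 2)
      = (c (t - 2) - 4 * c (t - 1) + 6 * c t - 4 * c (t + 1) + c (t + 2)) / ((real n + 3) * (real n + 4))"
    unfolding inv_col_def c_def by (simp only: add_divide_distrib diff_divide_distrib times_divide_eq_right)
  also have "c (t - 2) - 4 * c (t - 1) + 6 * c t - 4 * c (t + 1) + c (t + 2) = 0"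
    unfolding c_def by (simp add: algebra_simps)
  finally show ?thesis by simp
qed

(* Row i of A^n is the fourth difference at i of the vector extended by zero. The fourth difference
   kills the cubic inv_col n, and its roots -1, n + 1, n + 2 make the zero extension harmless except
   at -2, where inv_col n (-2) = -1 produces the 1 in row 0. *)
lemma toeplitz_inv_col:
  assumes "i \<le> n"
  shows "(\<Sum>j\<le>n. toeplitz_coeff (absdiff i j) * inv_col n j) = (if i = 0 then 1 else 0)"
proof -
  have "(if 2 \<le> i \<and> i \<le> n + 2 then inv_col n (real (i - 2)) else 0)
      = inv_col n (real i - 2) + (if i = 0 then 1 else 0)"
  proof -
    consider "i = 0" | "i = 1" | "2 \<le> i" by linarith
    then show ?thesis using assms inv_col_special_values(1,2) by cases (auto simp: of_nat_diff)
  qed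
  moreover have "(if 1 \<le> i \<and> i \<le> n + 1 then inv_col n (real (i - 1)) else 0) = inv_col n (real i - 1)"
    using assms inv_col_special_values(2) by (cases "i = 0") (auto simp: of_nat_diff)
  moreover have "(if i \<le> n then inv_col n (real i) else 0) = inv_col n (real i)"
    using assms by simp
  moreover have "(if i + 1 \<le> n then inv_col n (real (i + 1)) else 0) = inv_col n (real i + 1)"
    using assms inv_col_special_values(3)[of n] by (cases "i = n") (auto simp: add.commute)
  moreover have "(if i + 2 \<le> n then inv_col n (real (i + 2)) else 0) = inv_col n (real i + 2)"
  proof -
    have "i + 2 \<le> n \<or> i + 2 = n + 1 \<or> i + 2 = n + 2" using assms by linarith
    then show ?thesis using inv_col_special_values(3,4)[of n] by (auto simp: add.commute)
  qed
  ultimately show ?thesis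
    using inv_col_fourth_difference[of n "real i"] by (simp add: toeplitz_row_sum)
qed

lemma toeplitz_inv_col_rev:
  assumes "i \<le> n"
  shows "(\<Sum>j\<le>n. toeplitz_coeff (absdiff i j) * inv_col n (real (n - j))) = (if i = n then 1 else 0)"
proof -
  have "(\<Sum>j\<le>n. toeplitz_coeff (absdiff i j) * inv_col n (real (n - j)))
      = (\<Sum>j\<le>n. toeplitz_coeff (absdiff (n - i) j) * inv_col n (real j))"
    using assms
    by (intro sum.reindex_bij_witness[where i="\<lambda>j. n - j" and j="\<lambda>j. n - j"])
       (auto simp: absdiff_rev[symmetric])
  also have "\<dots> = (if i = n then 1 else 0)"
    using toeplitz_inv_col[of "n - i" n] assms by auto
  finally show ?thesis .
qed

lemma cofactor_eq_det_mult_solution: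
  fixes A :: "'a::comm_ring_1 mat"
  assumes A: "A \<in> carrier_mat n n" and x: "x \<in> carrier_vec n"
    and sol: "A *\<^sub>v x = unit_vec n r" and r: "r < n" and l: "l < n"
  shows "cofactor A r l = det A * x $ l"
proof -
  have "det A * x $ l = (\<Sum>i\<in>{0..<n}. if i = l then det A * x $ i else 0)"
    using l by simp
  also have "\<dots> = (\<Sum>i\<in>{0..<n}. det A * (if i = l then 1 else 0) * x $ i)"
    by (intro sum.cong) auto
  also have "\<dots> = ((det A \<cdot>\<^sub>m 1\<^sub>m n) *\<^sub>v x) $ l"
    using x l by (simp add: scalar_prod_def)
  also have "\<dots> = (adj_mat A *\<^sub>v (A *\<^sub>v x)) $ l"
    using assoc_mult_mat_vec[OF adj_mat(1)[OF A] A x] by (simp add: adj_mat(3)[OF A])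
  also have "\<dots> = cofactor A r l"
    using A r l by (simp add: sol adj_mat_def)
  finally show ?thesis by simp
qed

lemma cofactor_Amat_first_row:
  assumes "j \<le> n"
  shows "cofactor (Amat n) 0 j = Dd (n + 1) * inv_col n j"
proof -
  have "(Amat n *\<^sub>v Matrix.vec (n + 1) (\<lambda>j. inv_col n j)) $ i = (if i = 0 then 1 else 0)"
    if "i < n + 1" for i
    using that toeplitz_inv_col[of i n] by (subst Amat_mult_vec) simp_all
  then have "Amat n *\<^sub>v Matrix.vec (n + 1) (\<lambda>j. inv_col n j) = unit_vec (n + 1) 0"
    using Amat_carrier[of n] by (intro eq_vecI) auto
  from cofactor_eq_det_mult_solution[OF Amat_carrier _ this] assms show ?thesis
    by (simp add: Dd_def)
qed

lemma cofactor_Amat_last_row: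
  assumes "j \<le> n"
  shows "cofactor (Amat n) n j = Dd (n + 1) * inv_col n (real (n - j))"
proof -
  have "(Amat n *\<^sub>v Matrix.vec (n + 1) (\<lambda>j. inv_col n (real (n - j)))) $ i = (if i = n then 1 else 0)"
    if "i < n + 1" for i
    using that toeplitz_inv_col_rev[of i n] by (subst Amat_mult_vec) simp_all
  then have "Amat n *\<^sub>v Matrix.vec (n + 1) (\<lambda>j. inv_col n (real (n - j))) = unit_vec (n + 1) n"
    using Amat_carrier[of n] by (intro eq_vecI) auto
  from cofactor_eq_det_mult_solution[OF Amat_carrier _ this] assms show ?thesis
    by (simp add: Dd_def)
qed

lemma cofactor_Amat_0_0: "cofactor (Amat n) 0 0 = Dd n"
proof (cases n)
  case 0
  have "mat_delete (Amat 0) 0 0 = 1\<^sub>m 0" by (rule eq_matI) (auto simp: Amat_def)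
  then show ?thesis using 0 by (simp add: cofactor_def Dd_def)
next
  case (Suc m)
  have "mat_delete (Amat (Suc m)) 0 0 = Amat m"
    by (rule eq_matI) (auto simp: Amat_def mat_delete_def Let_def)
  then show ?thesis using Suc by (simp add: cofactor_def Dd_def)
qed

lemma Dd_closed_form: "Dd n = (real n + 1) * (real n + 2)^2 * (real n + 3) / 12"
proof (induction n)
  case 0
  show ?case by (simp add: Dd_def)
next
  case (Suc n)
  have "Dd n = Dd (Suc n) * ((real n + 1) * (real n + 2)) / ((real n + 3) * (real n + 4))"
    using cofactor_Amat_first_row[of 0 n] cofactor_Amat_0_0[of n] by (simp add: inv_col_def)
  moreover have "(real n + 3) * (real n + 4) \<noteq> 0" by simp
  ultimately have "Dd (Suc n) * ((real n + 1) * (real n + 2)) = Dd n * ((real n + 3) * (real n + 4))"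
    by (simp add: eq_divide_eq)
  then have "Dd (Suc n) * ((real n + 1) * (real n + 2))
      = (real (Suc n) + 1) * (real (Suc n) + 2)^2 * (real (Suc n) + 3) / 12 * ((real n + 1) * (real n + 2))"
    unfolding Suc.IH by (simp add: field_simps power2_eq_square)
  moreover have "(real n + 1) * (real n + 2) \<noteq> 0" by simp
  ultimately show ?case by (rule mult_right_cancel[THEN iffD1, rotated])
qed

lemma Dd_pos: "Dd n > 0"
  by (simp add: Dd_closed_form)

lemma normalised_pp_expansion:
  "pscale (1 / H2_norm pp) pp = (\<lambda>x y. Dd 1 / sqrt (Dd 1 * Dd 0) * inv_col 0 0 * p_mono 0 0 x y)"
proof -
  have "1 / H2_norm pp = Dd 1 / sqrt (Dd 1 * Dd 0) * inv_col 0 0"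
    by (simp add: H2_norm_pp Dd_closed_form inv_col_def field_simps)
  then show ?thesis by (simp add: fun_eq_iff pscale_def p_mono_0_0)
qed

lemma phi_expansion:
  "phi n = (\<lambda>x y. \<Sum>j\<le>n. Dd (n + 1) / sqrt (Dd (n + 1) * Dd n) * inv_col n (real j) * p_mono j (n - j) x y)"
proof (cases "n = 0")
  case True
  then show ?thesis by (simp add: phi_def normalised_pp_expansion)
next
  case False
  then show ?thesis
    by (auto simp: phi_def pscale_def p_mono_def fun_eq_iff sum_distrib_left cofactor_Amat_first_row
        intro!: sum.cong)
qed

lemma psi_expansion:
  "psi n = (\<lambda>x y. \<Sum>j\<le>n.
     Dd (n + 1) / sqrt (Dd (n + 1) * Dd n) * inv_col n (real (n - j)) * p_mono j (n - j) x y)"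
proof (cases "n = 0")
  case True
  then show ?thesis by (simp add: psi_def normalised_pp_expansion)
next
  case False
  then show ?thesis
    by (auto simp: psi_def pscale_def p_mono_def fun_eq_iff sum_distrib_left cofactor_Amat_last_row
        intro!: sum.cong)
qed

lemma inner_w2_phi_z2_psi:
  "H2_inner (pmul (mono 0 2) (phi n)) (pmul (mono 2 0) (psi n))
     = Dd (n + 1) / Dd n *
       (\<Sum>k\<le>n. inv_col n (real (n - k)) * (\<Sum>j\<le>n. toeplitz_coeff (absdiff (k + 2) j) * inv_col n (real j)))"
proof -
  define c where "c = Dd (n + 1) / sqrt (Dd (n + 1) * Dd n)"
  have "pmul (mono 0 2) (phi n) = (\<lambda>x y. \<Sum>j\<le>n. c * inv_col n (real j) * p_mono j (n - j + 2) x y)"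
    unfolding phi_expansion c_def pmul_mono_sum pmul_mono_p_mono add_0_right ..
  moreover have "pmul (mono 2 0) (psi n) = (\<lambda>x y. \<Sum>k\<le>n. c * inv_col n (real (n - k)) * p_mono (k + 2) (n - k) x y)"
    unfolding psi_expansion c_def pmul_mono_sum pmul_mono_p_mono add_0_right add.commute[of _ 2] ..
  ultimately have "H2_inner (pmul (mono 0 2) (phi n)) (pmul (mono 2 0) (psi n))
      = H2_inner (\<lambda>x y. \<Sum>j\<le>n. c * inv_col n (real j) * p_mono j (n - j + 2) x y)
                 (\<lambda>x y. \<Sum>k\<le>n. c * inv_col n (real (n - k)) * p_mono (k + 2) (n - k) x y)"
    by simp
  also have "\<dots> = (\<Sum>j\<le>n. \<Sum>k\<le>n. c * inv_col n (real j) * (c * inv_col n (real (n - k))) *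
                     H2_inner (p_mono j (n - j + 2)) (p_mono (k + 2) (n - k)))"
    by (rule H2_inner_sum_sum[where S = "{..n + 4} \<times> {..n + 4}"]) (auto intro!: p_mono_eq_0_outside)
  also have "\<dots> = (\<Sum>j\<le>n. \<Sum>k\<le>n. c\<^sup>2 * (inv_col n (real (n - k)) *
                     (toeplitz_coeff (absdiff (k + 2) j) * inv_col n (real j))))"
    by (intro sum.cong refl) (simp add: H2_inner_p_mono absdiff_commute power2_eq_square mult_ac)
  also have "\<dots> = c\<^sup>2 * (\<Sum>k\<le>n. inv_col n (real (n - k)) *
                     (\<Sum>j\<le>n. toeplitz_coeff (absdiff (k + 2) j) * inv_col n (real j)))"
    by (subst sum.swap) (simp only: sum_distrib_left)
  also have "c\<^sup>2 = Dd (n + 1) / Dd n"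
    using Dd_pos[of n] Dd_pos[of "n + 1"] by (simp add: c_def power_divide power2_eq_square)
  finally show ?thesis .
qed

(* Rows k + 2 \<le> n vanish, leaving k = n - 1 and k = n; for n = 0 the absent k = n - 1 term is
   matched by inv_col 0 1 = 0. *)
lemma inv_col_tail_sum:
  "(\<Sum>k\<le>n. inv_col n (real (n - k)) * (\<Sum>j\<le>n. toeplitz_coeff (absdiff (k + 2) j) * inv_col n (real j)))
     = inv_col n 0 * inv_col n (real n) + inv_col n 1 * (inv_col n (real n - 1) - 4 * inv_col n (real n))"
proof -
  define R where "R i = (\<Sum>j\<le>n. toeplitz_coeff (absdiff i j) * inv_col n (real j))" for i
  have R_low: "R (k + 2) = 0" if "k + 2 \<le> n" for k
    using toeplitz_inv_col[OF that] by (simp add: R_def)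
  have R_n1: "R (n + 1) = inv_col n (real n - 1) - 4 * inv_col n (real n)"
    using inv_col_special_values(2)[of 0]
    by (cases n) (simp_all add: R_def toeplitz_row_sum, simp add: toeplitz_coeff_def absdiff_def)
  have R_n2: "R (n + 2) = inv_col n (real n)"
    by (simp add: R_def toeplitz_row_sum)
  show ?thesis
  proof (cases n)
    case 0
    then show ?thesis unfolding R_def[symmetric] using R_n2 by (simp add: inv_col_def)
  next
    case (Suc m)
    have "(\<Sum>k<m. inv_col n (real (n - k)) * R (k + 2)) = 0"
      using Suc R_low by (intro sum.neutral) auto
    then show ?thesis
      unfolding R_def[symmetric] using Suc R_n1 R_n2 by (simp add: lessThan_Suc_atMost[symmetric])
  qed
qed

definition inner_w2z2 :: "nat \<Rightarrow> real" where
  "inner_w2z2 n = - 2 * ((real n)\<^sup>2 + 5 * real n - 2) / ((real n + 2) * (real n + 3) * (real n + 4))"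

lemma inner_w2_phi_z2_psi_eq: "H2_inner (pmul (mono 0 2) (phi n)) (pmul (mono 2 0) (psi n)) = inner_w2z2 n"
proof -
  have "H2_inner (pmul (mono 0 2) (phi n)) (pmul (mono 2 0) (psi n)) = Dd (n + 1) / Dd n *
      (inv_col n 0 * inv_col n (real n) + inv_col n 1 * (inv_col n (real n - 1) - 4 * inv_col n (real n)))"
    by (simp only: inner_w2_phi_z2_psi inv_col_tail_sum)
  also have "\<dots> = inner_w2z2 n"
  proof -
    have "real n + 1 \<noteq> 0" "real n + 2 \<noteq> 0" "real n + 3 \<noteq> 0" "real n + 4 \<noteq> 0" by linarith+
    then show ?thesis
      unfolding Dd_closed_form inv_col_def inner_w2z2_def
      by (simp add: divide_simps) (simp add: algebra_simps power2_eq_square)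
  qed
  finally show ?thesis .
qed

lemma inverse_squares_shifted_sums:
  "(\<lambda>n. 1 / (real n + real k + 1)\<^sup>2) sums (pi\<^sup>2 / 6 - (\<Sum>i<k. 1 / (real i + 1)\<^sup>2))"
proof -
  have "(\<lambda>n. 1 / (real n + 1)\<^sup>2) sums (pi\<^sup>2 / 6)"
    using inverse_squares_sums by (simp add: add.commute)
  then show ?thesis
    using sums_iff_shift[of "\<lambda>n. 1 / (real n + 1)\<^sup>2" k] by (simp add: add_ac)
qed

lemma telescoping_inverse_sums:
  fixes a :: real
  assumes "a > 0"
  shows "(\<lambda>n. 1 / (real n + a) - 1 / (real n + a + 1)) sums (1 / a)"
proof -
  have "filterlim (\<lambda>n. a + real n) at_top sequentially"
    by (rule filterlim_tendsto_add_at_top[OF tendsto_const filterlim_real_sequentially])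
  then have "(\<lambda>n. 1 / (a + real n)) \<longlonglongrightarrow> 0"
    by (intro tendsto_divide_0[OF tendsto_const] filterlim_at_top_imp_at_infinity)
  from telescope_sums'[OF this] show ?thesis by (simp add: add_ac)
qed

lemma inner_w2z2_squares_sums: "(\<lambda>n. (inner_w2z2 n)\<^sup>2) sums (178 / 3 * pi\<^sup>2 - 585)"
proof -
  have partial_fractions:
    "(inner_w2z2 n)\<^sup>2 =
       64 * (1 / (real n + 2)\<^sup>2) + 256 * (1 / (real n + 3)\<^sup>2) + 36 * (1 / (real n + 4)\<^sup>2)
       - 208 * (1 / (real n + 2) - 1 / (real n + 3)) - 144 * (1 / (real n + 3) - 1 / (real n + 4))" for n
  proof -
    have "real n + 2 \<noteq> 0" "real n + 3 \<noteq> 0" "real n + 4 \<noteq> 0" by linarith+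
    then show ?thesis
      unfolding inner_w2z2_def by (simp add: divide_simps power2_eq_square) (simp add: algebra_simps)
  qed
  have "(\<lambda>n. 64 * (1 / (real n + 2)\<^sup>2) + 256 * (1 / (real n + 3)\<^sup>2) + 36 * (1 / (real n + 4)\<^sup>2)
      - 208 * (1 / (real n + 2) - 1 / (real n + 3)) - 144 * (1 / (real n + 3) - 1 / (real n + 4)))
     sums (64 * (pi\<^sup>2 / 6 - 1) + 256 * (pi\<^sup>2 / 6 - 5 / 4) + 36 * (pi\<^sup>2 / 6 - 49 / 36) - 208 * (1 / 2) - 144 * (1 / 3))"
    using inverse_squares_shifted_sums[of 1] inverse_squares_shifted_sums[of 2] inverse_squares_shifted_sums[of 3]
      telescoping_inverse_sums[of 2] telescoping_inverse_sums[of 3]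
    by (intro sums_add sums_diff sums_mult) (simp_all add: add_ac numeral_2_eq_2 numeral_3_eq_3)
  then show ?thesis
    unfolding partial_fractions by (simp add: algebra_simps)
qed

theorem theorem3p3:
  shows "(Sigma_term 2) sums (178 / 3 * pi\<^sup>2 - 585)"
proof -
  have "Sigma_term 2 = (\<lambda>n. (inner_w2z2 n)\<^sup>2)"
    by (simp add: fun_eq_iff Sigma_term_def inner_w2_phi_z2_psi_eq)
  with inner_w2z2_squares_sums show ?thesis by simp
qed

end
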